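(* Let $\lambda>0$. There is a constant $C$ depending only on $\lambda$ such that for all $b\in(-1,1)$, $$\int_{-1}^1(1-bs)^{-\lambda-1}(1-s)(1-s^2)^{\lambda-1}ds\le\frac{C}{1-|b|}.$$ *)

theory Defs
  imports "HOL-Analysis.Analysis"
begin

end

theory Submission
  imports Defs
begin

(* With a = 1 - |b| and t = 1 - |s| one has 1 - b s \<ge> (a + t) / 2, 1 - s \<le> 2 and
   1 - s^2 = t (2 - t), so the integrand is at most a constant (depending on lam) times the kernel
   (a + t) powr (-lam - 1) * t powr (lam - 1).  The kernel has the explicit antiderivative
   (t / (a + t)) powr lam / (lam * a), which increases from 0 to less than 1 / (lam * a); this is
   where the factor 1 / (1 - |b|) comes from. *)

definition kernel :: "real \<Rightarrow> real \<Rightarrow> real \<Rightarrow> real" where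
  "kernel a lam t = (a + t) powr (- lam - 1) * t powr (lam - 1)"

lemma kernel_nonneg: "0 \<le> kernel a lam t"
  by (simp add: kernel_def)

lemma has_real_derivative_ratio_powr:
  assumes "0 < a" "0 < u"
  shows "((\<lambda>u. (u / (a + u)) powr lam) has_real_derivative lam * a * kernel a lam u) (at u)"
proof -
  have deriv: "((\<lambda>u. (u / (a + u)) powr lam) has_real_derivative
      lam * ((u / (a + u)) powr (lam - 1) * (a / (a + u)^2))) (at u)"
    using assms by (auto intro!: derivative_eq_intros simp: power2_eq_square)
  have "(a + u) powr (- lam - 1) * ((a + u) powr (lam - 1) * (a + u)^2) = 1"
    using assms by (simp flip: powr_add powr_numeral)
  then have "(u / (a + u)) powr (lam - 1) * (a / (a + u)^2) = a * kernel a lam u"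
    using assms by (simp add: kernel_def powr_divide field_simps)
  then show ?thesis
    using deriv by (simp add: mult.assoc)
qed

lemma tendsto_ratio_powr_zero:
  fixes f :: "'a \<Rightarrow> real"
  assumes "0 < a" "0 < lam" "(f \<longlongrightarrow> 0) F" "\<forall>\<^sub>F x in F. 0 \<le> f x"
  shows "((\<lambda>x. (f x / (a + f x)) powr lam) \<longlongrightarrow> 0) F"
proof (rule tendsto_zero_powrI[where b = lam])
  show "((\<lambda>x. f x / (a + f x)) \<longlongrightarrow> 0) F"
    using assms by (auto intro!: tendsto_eq_intros)
  show "\<forall>\<^sub>F x in F. 0 \<le> f x / (a + f x)"
    using assms(4) by eventually_elim (use assms(1) in auto)
qed (use assms in auto)

lemma set_integral_kernel_reflections:
  assumes a: "0 < a" and lam: "0 < lam"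
  shows "set_integrable lborel {-1<..<1} (\<lambda>s. kernel a lam (1 + s) + kernel a lam (1 - s))"
    and "(LBINT s:{-1<..<1}. kernel a lam (1 + s) + kernel a lam (1 - s))
           = 2 * (2 / (a + 2)) powr lam / (lam * a)"
proof -
  define \<phi> where "\<phi> u = (u / (a + u)) powr lam" for u
  define F where "F s = (\<phi> (1 + s) - \<phi> (1 - s)) / (lam * a)" for s
  have deriv: "DERIV F s :> kernel a lam (1 + s) + kernel a lam (1 - s)"
    if "ereal (-1) < ereal s" "ereal s < ereal 1" for s
  proof -
    have "DERIV (\<lambda>s. \<phi> (1 + s)) s :> lam * a * kernel a lam (1 + s) * 1"
      unfolding \<phi>_def using that a
      by (intro DERIV_chain2[OF has_real_derivative_ratio_powr]) (auto intro!: derivative_eq_intros)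
    moreover have "DERIV (\<lambda>s. \<phi> (1 - s)) s :> lam * a * kernel a lam (1 - s) * (- 1)"
      unfolding \<phi>_def using that a
      by (intro DERIV_chain2[OF has_real_derivative_ratio_powr]) (auto intro!: derivative_eq_intros)
    ultimately have "DERIV F s :> (lam * a * kernel a lam (1 + s) * 1
        - lam * a * kernel a lam (1 - s) * (- 1)) / (lam * a)"
      unfolding F_def by (intro DERIV_cdivide DERIV_diff)
    then show ?thesis
      using a lam by (simp add: add_divide_distrib)
  qed
  have cont: "isCont (\<lambda>s. kernel a lam (1 + s) + kernel a lam (1 - s)) s"
    if "ereal (-1) < ereal s" "ereal s < ereal 1" for s
    unfolding kernel_def using that a by (intro continuous_intros) auto
  have \<phi>_2: "((\<lambda>s. \<phi> (f s)) \<longlongrightarrow> \<phi> 2) G" if "(f \<longlongrightarrow> 2) G" for f :: "real \<Rightarrow> real" and G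
    unfolding \<phi>_def using that a by (auto intro!: tendsto_eq_intros)
  have lim_left: "((F \<circ> real_of_ereal) \<longlongrightarrow> (0 - \<phi> 2) / (lam * a)) (at_right (ereal (-1)))"
    unfolding ereal_tendsto_simps F_def
  proof (intro tendsto_divide tendsto_diff \<phi>_2)
    show "((\<lambda>s. \<phi> (1 + s)) \<longlongrightarrow> 0) (at_right (- 1))"
      unfolding \<phi>_def using a lam
      by (intro tendsto_ratio_powr_zero)
        (auto intro!: tendsto_eq_intros simp: eventually_at_right_field intro: exI[of _ 0])
  qed (use a lam in \<open>auto intro!: tendsto_eq_intros\<close>)
  have lim_right: "((F \<circ> real_of_ereal) \<longlongrightarrow> (\<phi> 2 - 0) / (lam * a)) (at_left (ereal 1))"
    unfolding ereal_tendsto_simps F_def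
  proof (intro tendsto_divide tendsto_diff \<phi>_2)
    show "((\<lambda>s. \<phi> (1 - s)) \<longlongrightarrow> 0) (at_left 1)"
      unfolding \<phi>_def using a lam
      by (intro tendsto_ratio_powr_zero)
        (auto intro!: tendsto_eq_intros simp: eventually_at_left_field intro: exI[of _ 0])
  qed (use a lam in \<open>auto intro!: tendsto_eq_intros\<close>)
  note FTC = interval_integral_FTC_nonneg[OF _ deriv cont _ lim_left lim_right]
  show "set_integrable lborel {-1<..<1} (\<lambda>s. kernel a lam (1 + s) + kernel a lam (1 - s))"
    using FTC(1) by (simp add: kernel_nonneg)
  show "(LBINT s:{-1<..<1}. kernel a lam (1 + s) + kernel a lam (1 - s))
      = 2 * (2 / (a + 2)) powr lam / (lam * a)"
    using FTC(2) by (simp add: kernel_nonneg interval_lebesgue_integral_def \<phi>_def)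
qed

lemma mean_le_one_minus_mult:
  fixes b s :: real
  assumes "\<bar>b\<bar> \<le> 1" "\<bar>s\<bar> \<le> 1"
  shows "((1 - \<bar>b\<bar>) + (1 - \<bar>s\<bar>)) / 2 \<le> 1 - b * s"
proof -
  have "b * s \<le> \<bar>b\<bar> * \<bar>s\<bar>"
    by (metis abs_ge_self abs_mult)
  moreover have "\<bar>b\<bar> * \<bar>s\<bar> \<le> \<bar>b\<bar>" "\<bar>b\<bar> * \<bar>s\<bar> \<le> \<bar>s\<bar>"
    using assms by (auto intro: mult_left_le mult_left_le_one_le)
  ultimately have "2 * (b * s) \<le> \<bar>b\<bar> + \<bar>s\<bar>"
    by linarith
  then show ?thesis
    by (simp add: field_simps)
qed

lemma one_minus_square_powr_le:
  fixes s lam :: real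
  assumes "\<bar>s\<bar> < 1"
  shows "(1 - s\<^sup>2) powr (lam - 1) \<le> max 1 (2 powr (lam - 1)) * (1 - \<bar>s\<bar>) powr (lam - 1)"
proof -
  have factor: "1 - s\<^sup>2 = (1 - \<bar>s\<bar>) * (1 + \<bar>s\<bar>)"
    by (simp add: algebra_simps power2_eq_square)
  have "(1 + \<bar>s\<bar>) powr (lam - 1) \<le> max 1 (2 powr (lam - 1))"
  proof (cases "1 \<le> lam")
    case True
    then have "(1 + \<bar>s\<bar>) powr (lam - 1) \<le> 2 powr (lam - 1)"
      using assms by (intro powr_mono2) auto
    then show ?thesis by linarith
  next
    case False
    then have "(1 + \<bar>s\<bar>) powr (lam - 1) \<le> 1 powr (lam - 1)"
      by (intro powr_mono2') auto
    then show ?thesis by simp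
  qed
  then show ?thesis
    using assms unfolding factor by (simp add: powr_mult mult.commute mult_right_mono)
qed

lemma integrand_le_kernel:
  fixes b s lam :: real
  assumes lam: "0 < lam" and b: "\<bar>b\<bar> < 1" and s: "\<bar>s\<bar> < 1"
  shows "(1 - b * s) powr (- lam - 1) * (1 - s) * (1 - s\<^sup>2) powr (lam - 1)
     \<le> 2 powr (lam + 2) * max 1 (2 powr (lam - 1)) * kernel (1 - \<bar>b\<bar>) lam (1 - \<bar>s\<bar>)"
proof -
  define a t where "a = 1 - \<bar>b\<bar>" and "t = 1 - \<bar>s\<bar>"
  have "0 < a" "0 < t"
    using b s by (auto simp: a_def t_def)
  have "(1 - b * s) powr (- lam - 1) \<le> ((a + t) / 2) powr (- lam - 1)"
    using mean_le_one_minus_mult[of b s] b s lam \<open>0 < a\<close> \<open>0 < t\<close>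
    unfolding a_def t_def by (intro powr_mono2') auto
  also have "\<dots> = (a + t) powr (- lam - 1) / 2 powr (- lam - 1)"
    by (rule powr_divide)
  also have "\<dots> = 2 powr (lam + 1) * (a + t) powr (- lam - 1)"
    using powr_minus_divide[of "2::real" "lam + 1"] by simp
  finally have base: "(1 - b * s) powr (- lam - 1) \<le> 2 powr (lam + 1) * (a + t) powr (- lam - 1)" .
  have "(1 - b * s) powr (- lam - 1) * (1 - s) * (1 - s\<^sup>2) powr (lam - 1)
      \<le> (2 powr (lam + 1) * (a + t) powr (- lam - 1)) * 2 * (max 1 (2 powr (lam - 1)) * t powr (lam - 1))"
    using base one_minus_square_powr_le[OF s, of lam] s unfolding t_def
    by (intro mult_mono) auto
  also have "\<dots> = 2 powr (lam + 2) * max 1 (2 powr (lam - 1)) * kernel a lam t"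
    by (simp add: kernel_def powr_add ac_simps)
  finally show ?thesis
    unfolding a_def t_def .
qed

lemma integrand_set_integral_le:
  fixes b lam :: real
  assumes lam: "0 < lam" and "-1 < b" "b < 1"
  shows "set_integrable lborel {-1<..<1}
           (\<lambda>s. (1 - b * s) powr (- lam - 1) * (1 - s) * (1 - s\<^sup>2) powr (lam - 1))"
    and "(LBINT s:{-1<..<1}. (1 - b * s) powr (- lam - 1) * (1 - s) * (1 - s\<^sup>2) powr (lam - 1))
           \<le> 2 powr (lam + 3) * max 1 (2 powr (lam - 1)) / lam / (1 - \<bar>b\<bar>)"
proof -
  define f where "f s = (1 - b * s) powr (- lam - 1) * (1 - s) * (1 - s\<^sup>2) powr (lam - 1)" for s
  define a where "a = 1 - \<bar>b\<bar>"
  define K where "K = 2 powr (lam + 2) * max 1 (2 powr (lam - 1))"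
  define g where "g s = K * (kernel a lam (1 + s) + kernel a lam (1 - s))" for s
  have b: "\<bar>b\<bar> < 1"
    using assms by auto
  have a: "0 < a"
    using b by (simp add: a_def)
  have K: "0 < K"
    by (simp add: K_def)
  have g_int: "set_integrable lborel {-1<..<1} g"
    unfolding g_def by (intro set_integrable_mult_right set_integral_kernel_reflections a lam)
  have f_nonneg: "0 \<le> f s" if "s \<in> {-1<..<1}" for s
    using that by (simp add: f_def)
  have f_le_g: "f s \<le> g s" if "s \<in> {-1<..<1}" for s
  proof -
    have "\<bar>s\<bar> < 1"
      using that by auto
    then have "f s \<le> K * kernel a lam (1 - \<bar>s\<bar>)"
      unfolding f_def K_def a_def by (rule integrand_le_kernel[OF lam b])
    also have "\<dots> \<le> g s"
      unfolding g_def using K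
      by (intro mult_left_mono) (auto simp: kernel_nonneg abs_if)
    finally show ?thesis .
  qed
  have f_int: "set_integrable lborel {-1<..<1} f"
  proof (rule set_integrable_bound[OF g_int])
    show "set_borel_measurable lborel {-1<..<1} f"
      unfolding f_def set_borel_measurable_def by measurable
    show "AE s in lborel. s \<in> {-1<..<1} \<longrightarrow> norm (f s) \<le> norm (g s)"
      using f_nonneg f_le_g by (intro AE_I2) force
  qed
  have "(LBINT s:{-1<..<1}. f s) \<le> (LBINT s:{-1<..<1}. g s)"
    by (rule set_integral_mono[OF f_int g_int f_le_g])
  also have "\<dots> = K * (2 * (2 / (a + 2)) powr lam / (lam * a))"
    unfolding g_def set_integral_mult_right set_integral_kernel_reflections(2)[OF a lam] ..
  also have "\<dots> \<le> K * (2 / (lam * a))"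
    using a lam K by (intro mult_left_mono divide_right_mono) (auto intro: powr_le1)
  also have "\<dots> = 2 powr (lam + 3) * max 1 (2 powr (lam - 1)) / lam / (1 - \<bar>b\<bar>)"
    unfolding K_def a_def by (simp add: powr_add field_simps)
  finally show "(LBINT s:{-1<..<1}. (1 - b * s) powr (- lam - 1) * (1 - s) * (1 - s\<^sup>2) powr (lam - 1))
      \<le> 2 powr (lam + 3) * max 1 (2 powr (lam - 1)) / lam / (1 - \<bar>b\<bar>)"
    unfolding f_def .
  show "set_integrable lborel {-1<..<1}
      (\<lambda>s. (1 - b * s) powr (- lam - 1) * (1 - s) * (1 - s\<^sup>2) powr (lam - 1))"
    using f_int unfolding f_def .
qed

theorem mainTheorem8:
  fixes lam :: real
  assumes "lam > 0"
  shows "\<exists>C::real. \<forall>b::real. -1 < b \<and> b < 1 \<longrightarrow>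
     set_integrable lborel {-1<..<1}
       (\<lambda>s. (1 - b * s) powr (- lam - 1) * (1 - s) * (1 - s\<^sup>2) powr (lam - 1)) \<and>
     (LBINT s:{-1<..<1}. (1 - b * s) powr (- lam - 1) * (1 - s) * (1 - s\<^sup>2) powr (lam - 1))
       \<le> C / (1 - \<bar>b\<bar>)"
  using integrand_set_integral_le[OF assms]
  by (intro exI[of _ "2 powr (lam + 3) * max 1 (2 powr (lam - 1)) / lam"] allI impI conjI) blast+

end
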